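(* Let $f:A\to B$ be a homomorphism of finite-dimensional semisimple $\mathbb Z_2$-graded algebras over $\mathbb C$ and let $C\subset A$ be a simple graded subalgebra. Then $f(SZ(A,C))=SZ(f(A),f(C))$.
   Context: A homomorphism of graded algebras is a parity-preserving algebra homomorphism. Supercentralizer: $SZ(A,C)$ is the span of homogeneous $a\in A$ with $ac=(-1)^{p(a)p(c)}ca$ for all homogeneous $c\in C$; similarly $SZ(f(A),f(C))$ inside the graded algebra $f(A)$. *)

theory Defs
  imports Complex_Main
begin

definition complex_algebra :: "(complex \<Rightarrow> 'a::ring \<Rightarrow> 'a) \<Rightarrow> bool" where
  "complex_algebra s \<longleftrightarrow> vector_space s \<and>
     (\<forall>c x y. s c (x * y) = s c x * y \<and> s c (x * y) = x * s c y)"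

definition fin_dim :: "(complex \<Rightarrow> 'a::ring \<Rightarrow> 'a) \<Rightarrow> bool" where
  "fin_dim s \<longleftrightarrow> (\<exists>B. finite B \<and> module.span s B = UNIV)"

text \<open>A Z2-grading of the whole algebra: P False = even part, P True = odd part.\<close>
definition graded_algebra :: "(complex \<Rightarrow> 'a::ring \<Rightarrow> 'a) \<Rightarrow> (bool \<Rightarrow> 'a set) \<Rightarrow> bool" where
  "graded_algebra s P \<longleftrightarrow> complex_algebra s \<and>
     module.subspace s (P False) \<and> module.subspace s (P True) \<and>
     P False \<inter> P True = {0} \<and>
     (\<forall>x. \<exists>y z. y \<in> P False \<and> z \<in> P True \<and> x = y + z) \<and>
     (\<forall>p q x y. x \<in> P p \<longrightarrow> y \<in> P q \<longrightarrow> x * y \<in> P (p \<noteq> q))"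

definition graded_subspace :: "(complex \<Rightarrow> 'a::ring \<Rightarrow> 'a) \<Rightarrow> (bool \<Rightarrow> 'a set) \<Rightarrow> 'a set \<Rightarrow> bool" where
  "graded_subspace s P S \<longleftrightarrow> module.subspace s S \<and>
     (\<forall>x\<in>S. \<exists>y z. y \<in> S \<inter> P False \<and> z \<in> S \<inter> P True \<and> x = y + z)"

definition graded_subalgebra :: "(complex \<Rightarrow> 'a::ring \<Rightarrow> 'a) \<Rightarrow> (bool \<Rightarrow> 'a set) \<Rightarrow> 'a set \<Rightarrow> bool" where
  "graded_subalgebra s P S \<longleftrightarrow> graded_subspace s P S \<and> (\<forall>x\<in>S. \<forall>y\<in>S. x * y \<in> S)"

definition graded_ideal :: "(complex \<Rightarrow> 'a::ring \<Rightarrow> 'a) \<Rightarrow> (bool \<Rightarrow> 'a set) \<Rightarrow> 'a set \<Rightarrow> 'a set \<Rightarrow> bool" where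
  "graded_ideal s P S I \<longleftrightarrow> I \<subseteq> S \<and> graded_subspace s P I \<and>
     (\<forall>x\<in>S. \<forall>y\<in>I. x * y \<in> I \<and> y * x \<in> I)"

fun mprod :: "'a::times \<Rightarrow> 'a list \<Rightarrow> 'a" where
  "mprod x [] = x"
| "mprod x (y # ys) = mprod (x * y) ys"

definition nilpotent_set :: "'a::ring set \<Rightarrow> bool" where
  "nilpotent_set I \<longleftrightarrow> (\<exists>n. \<forall>x xs. x \<in> I \<longrightarrow> set xs \<subseteq> I \<longrightarrow> length xs = n \<longrightarrow> mprod x xs = 0)"

definition semisimple_galg :: "(complex \<Rightarrow> 'a::ring \<Rightarrow> 'a) \<Rightarrow> (bool \<Rightarrow> 'a set) \<Rightarrow> 'a set \<Rightarrow> bool" where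
  "semisimple_galg s P S \<longleftrightarrow> (\<forall>I. graded_ideal s P S I \<longrightarrow> nilpotent_set I \<longrightarrow> I = {0})"

definition simple_galg :: "(complex \<Rightarrow> 'a::ring \<Rightarrow> 'a) \<Rightarrow> (bool \<Rightarrow> 'a set) \<Rightarrow> 'a set \<Rightarrow> bool" where
  "simple_galg s P S \<longleftrightarrow> (\<exists>x\<in>S. \<exists>y\<in>S. x * y \<noteq> 0) \<and>
     (\<forall>I. graded_ideal s P S I \<longrightarrow> I = {0} \<or> I = S)"

definition graded_hom :: "(complex \<Rightarrow> 'a::ring \<Rightarrow> 'a) \<Rightarrow> (bool \<Rightarrow> 'a set) \<Rightarrow>
     (complex \<Rightarrow> 'b::ring \<Rightarrow> 'b) \<Rightarrow> (bool \<Rightarrow> 'b set) \<Rightarrow> ('a \<Rightarrow> 'b) \<Rightarrow> bool" where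
  "graded_hom s P t Q f \<longleftrightarrow> Vector_Spaces.linear s t f \<and>
     (\<forall>x y. f (x * y) = f x * f y) \<and> (\<forall>p. f ` P p \<subseteq> Q p)"

text \<open>Supercentralizer SZ(S,C) inside the graded algebra with carrier S and grading
  S \<inter> P p: span of homogeneous a in S with a c = (-1)^(p(a)p(c)) c a for all homogeneous c in C.\<close>
definition SZ :: "(complex \<Rightarrow> 'a::ring \<Rightarrow> 'a) \<Rightarrow> (bool \<Rightarrow> 'a set) \<Rightarrow> 'a set \<Rightarrow> 'a set \<Rightarrow> 'a set" where
  "SZ s P S C = module.span s {a. \<exists>p. a \<in> S \<inter> P p \<and>
      (\<forall>q c. c \<in> C \<inter> P q \<longrightarrow> a * c = (if p \<and> q then - (c * a) else c * a))}"

end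

theory Submission
  imports Defs
begin

(* The kernel K of f is an ideal stable under the grading automorphism, and
   semisimplicity of A forces K to have a unit element e, which is then central and even.
   Hence every homogeneous element of f(A) has a preimage a of the same parity with e a = 0,
   and f is injective on such elements.  A supercommutation relation therefore holds for a
   exactly when it holds for f(a): the defect lies in K and is killed by e.  So f maps the
   homogeneous supercommuting generators of SZ(A,C) onto those of SZ(f(A), f(C)), and
   linearity of f finishes the proof. *)

text \<open>A ring equation used when enlarging an idempotent e by an idempotent g
  with e g = 0: the element e + g - g e is idempotent and absorbs e and g from the left.\<close>

lemma idempotent_extension:
  fixes e g :: "'a::ring"
  assumes ee: "e * e = e" and gg: "g * g = g" and eg: "e * g = 0"
  defines "e' \<equiv> e + g - g * e"
  shows "e' * e = e" and "e' * g = g" and "e' * e' = e'"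
proof -
  show e'e: "e' * e = e"
    unfolding e'_def by (simp add: distrib_right left_diff_distrib mult.assoc ee)
  show e'g: "e' * g = g"
    unfolding e'_def by (simp add: distrib_right left_diff_distrib mult.assoc eg gg)
  have "e' * e' = e' * e + e' * g - e' * g * e"
    unfolding e'_def by (simp add: distrib_left right_diff_distrib mult.assoc)
  then show "e' * e' = e'" unfolding e'e e'g by (simp add: e'_def)
qed


section \<open>Graded algebras\<close>

locale graded_alg =
  fixes s :: "complex \<Rightarrow> 'a::ring \<Rightarrow> 'a" and P :: "bool \<Rightarrow> 'a set"
  assumes graded: "graded_algebra s P"
begin

sublocale V: vector_space s
  using graded unfolding graded_algebra_def complex_algebra_def by blast

lemma scale_mult_left: "s c x * y = s c (x * y)"
  and scale_mult_right: "x * s c y = s c (x * y)"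
  using graded unfolding graded_algebra_def complex_algebra_def by metis+

lemma subspace_P: "V.subspace (P p)"
  using graded unfolding graded_algebra_def by (cases p) auto

lemma P_disjoint: "x \<in> P p \<Longrightarrow> x \<in> P (\<not> p) \<Longrightarrow> x = 0"
  using graded unfolding graded_algebra_def by (cases p) auto

lemma P_decomp: "\<exists>y z. y \<in> P False \<and> z \<in> P True \<and> x = y + z"
  using graded unfolding graded_algebra_def by auto

lemma P_mult: "x \<in> P p \<Longrightarrow> y \<in> P q \<Longrightarrow> x * y \<in> P (p \<noteq> q)"
  using graded unfolding graded_algebra_def by auto

lemma endo_module_hom:
  assumes "\<And>x y. h (x + y) = h x + h y" and "\<And>c x. h (s c x) = s c (h x)"
  shows "module_hom s s h"
  using assms V.module_axioms unfolding module_hom_iff by blast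

lemma mult_left_module_hom: "module_hom s s (\<lambda>y. a * y)"
  by (rule endo_module_hom) (simp_all add: distrib_left scale_mult_right)

lemma decomp_unique:
  assumes "y \<in> P False" "z \<in> P True" "y' \<in> P False" "z' \<in> P True" and "y + z = y' + z'"
  shows "y = y' \<and> z = z'"
proof -
  have "y - y' = z' - z" using assms(5) by (simp add: algebra_simps)
  moreover have "y - y' \<in> P False" "z' - z \<in> P True"
    using assms(1-4) V.subspace_diff[OF subspace_P] by blast+
  ultimately have "y - y' = 0" using P_disjoint[of "y - y'" False] by auto
  then show ?thesis using assms(5) by simp
qed

definition proj :: "bool \<Rightarrow> 'a \<Rightarrow> 'a" where
  "proj q x = (SOME y. y \<in> P q \<and> x - y \<in> P (\<not> q))"

lemma proj_spec: "proj q x \<in> P q \<and> x - proj q x \<in> P (\<not> q)"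
proof -
  obtain y z where yz: "y \<in> P False" "z \<in> P True" "x = y + z" using P_decomp by blast
  then have "\<exists>w. w \<in> P q \<and> x - w \<in> P (\<not> q)"
    by (cases q) (rule exI[of _ z] exI[of _ y]; simp)+
  then show ?thesis unfolding proj_def by (rule someI_ex)
qed

lemma proj_decomp:
  assumes "y \<in> P False" "z \<in> P True"
  shows "proj False (y + z) = y" and "proj True (y + z) = z"
proof -
  have "y + z = proj False (y + z) + (y + z - proj False (y + z))" by simp
  then show "proj False (y + z) = y"
    using decomp_unique[OF assms] proj_spec[of False "y + z"] by metis
  have "y + z = (y + z - proj True (y + z)) + proj True (y + z)" by simp
  then show "proj True (y + z) = z"
    using decomp_unique[OF assms] proj_spec[of True "y + z"] by metis
qed

lemma proj_sum: "proj False x + proj True x = x"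
  using P_decomp[of x] proj_decomp by auto

lemma proj_homogeneous: "x \<in> P q \<Longrightarrow> proj q x = x"
  using proj_decomp[of x 0] proj_decomp[of 0 x] V.subspace_0[OF subspace_P]
  by (cases q) auto

lemma graded_subspace_proj:
  assumes "graded_subspace s P S" and "x \<in> S"
  shows "proj q x \<in> S"
proof -
  obtain y z where "y \<in> S \<inter> P False" "z \<in> S \<inter> P True" "x = y + z"
    using assms unfolding graded_subspace_def by blast
  then show ?thesis using proj_decomp[of y z] by (cases q) auto
qed

definition grading_aut :: "'a \<Rightarrow> 'a" where
  "grading_aut x = proj False x - proj True x"

lemma grading_aut_decomp: "y \<in> P False \<Longrightarrow> z \<in> P True \<Longrightarrow> grading_aut (y + z) = y - z"
  unfolding grading_aut_def using proj_decomp by simp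

lemma grading_aut_add: "grading_aut (x + x') = grading_aut x + grading_aut x'"
proof -
  obtain y z y' z' where d: "y \<in> P False" "z \<in> P True" "x = y + z"
    "y' \<in> P False" "z' \<in> P True" "x' = y' + z'" using P_decomp by meson
  have "y + y' \<in> P False" "z + z' \<in> P True"
    using d V.subspace_add[OF subspace_P] by blast+
  then have "grading_aut ((y + y') + (z + z')) = (y + y') - (z + z')"
    by (rule grading_aut_decomp)
  moreover have "x + x' = (y + y') + (z + z')" using d by (simp add: algebra_simps)
  ultimately have "grading_aut (x + x') = (y + y') - (z + z')" by (simp only:)
  also have "\<dots> = (y - z) + (y' - z')" by (simp add: algebra_simps)
  also have "\<dots> = grading_aut x + grading_aut x'" using d grading_aut_decomp by simp
  finally show ?thesis .
qed

lemma grading_aut_scale: "grading_aut (s c x) = s c (grading_aut x)"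
proof -
  obtain y z where d: "y \<in> P False" "z \<in> P True" "x = y + z" using P_decomp by blast
  have "s c x = s c y + s c z" using d V.scale_right_distrib by simp
  moreover have "s c y \<in> P False" "s c z \<in> P True"
    using d V.subspace_scale[OF subspace_P] by blast+
  ultimately show ?thesis using d grading_aut_decomp by (simp add: V.scale_right_diff_distrib)
qed

lemma grading_aut_mult: "grading_aut (x * x') = grading_aut x * grading_aut x'"
proof -
  obtain y z y' z' where d: "y \<in> P False" "z \<in> P True" "x = y + z"
    "y' \<in> P False" "z' \<in> P True" "x' = y' + z'" using P_decomp by meson
  have "y * y' \<in> P False" "z * z' \<in> P False" "y * z' \<in> P True" "z * y' \<in> P True"
    using P_mult[OF d(1,4)] P_mult[OF d(2,5)] P_mult[OF d(1,5)] P_mult[OF d(2,4)] by simp_all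
  then have "y * y' + z * z' \<in> P False" "y * z' + z * y' \<in> P True"
    using V.subspace_add[OF subspace_P] by blast+
  then have "grading_aut ((y * y' + z * z') + (y * z' + z * y'))
      = (y * y' + z * z') - (y * z' + z * y')"
    by (rule grading_aut_decomp)
  moreover have "x * x' = (y * y' + z * z') + (y * z' + z * y')"
    using d by (simp add: distrib_left distrib_right add_ac)
  ultimately have "grading_aut (x * x') = (y * y' + z * z') - (y * z' + z * y')" by (simp only:)
  also have "\<dots> = (y - z) * (y' - z')" by (simp add: left_diff_distrib right_diff_distrib)
  also have "\<dots> = grading_aut x * grading_aut x'" using d grading_aut_decomp by simp
  finally show ?thesis .
qed

lemma grading_aut_zero: "grading_aut 0 = 0"
  using grading_aut_add[of 0 0] by simp

lemma grading_aut_involution: "grading_aut (grading_aut x) = x"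
proof -
  obtain y z where d: "y \<in> P False" "z \<in> P True" "x = y + z" using P_decomp by blast
  have "- z \<in> P True" using d V.subspace_neg[OF subspace_P] by blast
  then show ?thesis using d grading_aut_decomp[of y "- z"] grading_aut_decomp by simp
qed

lemma grading_aut_fixed_even:
  assumes "grading_aut x = x"
  shows "x \<in> P False"
proof -
  obtain y z where d: "y \<in> P False" "z \<in> P True" "x = y + z" using P_decomp by blast
  have "s 2 z = z + z" using V.scale_left_distrib[of 1 1 z] by simp
  also have "\<dots> = 0" using assms d grading_aut_decomp by (simp add: algebra_simps)
  finally have "z = 0" by simp
  then show ?thesis using d by simp
qed

text \<open>A subspace stable under the grading automorphism is graded, since the even
  component of x is (x + grading_aut x) / 2.\<close>

lemma stable_subspace_proj:
  assumes S: "V.subspace S" and stable: "grading_aut ` S \<subseteq> S" and x: "x \<in> S"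
  shows "proj q x \<in> S"
proof -
  have "s 2 (proj False x) = x + grading_aut x"
    using proj_sum[of x] V.scale_left_distrib[of 1 1 "proj False x"]
    by (simp add: grading_aut_def algebra_simps)
  moreover have "proj False x = s (1/2) (s 2 (proj False x))" by simp
  ultimately have "proj False x = s (1/2) (x + grading_aut x)" by simp
  then have even: "proj False x \<in> S"
    using V.subspace_scale[OF S] V.subspace_add[OF S x] stable x by auto
  have "proj True x = x - proj False x" using proj_sum[of x] by (simp add: algebra_simps)
  then have "proj True x \<in> S" using V.subspace_diff[OF S x even] by simp
  then show ?thesis using even by (cases q) auto
qed

lemma stable_subspace_graded:
  assumes S: "V.subspace S" and stable: "grading_aut ` S \<subseteq> S"
  shows "graded_subspace s P S"
  unfolding graded_subspace_def
proof (intro conjI ballI S)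
  fix x assume "x \<in> S"
  then have "proj False x \<in> S \<inter> P False" "proj True x \<in> S \<inter> P True"
    using stable_subspace_proj[OF S stable] proj_spec by blast+
  then show "\<exists>y z. y \<in> S \<inter> P False \<and> z \<in> S \<inter> P True \<and> x = y + z"
    using proj_sum[of x] by metis
qed


section \<open>Two-sided ideals\<close>

definition ideal :: "'a set \<Rightarrow> bool" where
  "ideal I \<longleftrightarrow> V.subspace I \<and> (\<forall>x\<in>I. \<forall>a. a * x \<in> I \<and> x * a \<in> I)"

lemma ideal_Int: "ideal I \<Longrightarrow> ideal J \<Longrightarrow> ideal (I \<inter> J)"
  unfolding ideal_def using V.subspace_inter by blast

lemma ideal_sum:
  assumes I: "ideal I" and J: "ideal J"
  shows "ideal {x + y | x y. x \<in> I \<and> y \<in> J}" (is "ideal ?S")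
proof -
  have sI: "V.subspace I" and sJ: "V.subspace J" using I J unfolding ideal_def by auto
  have mem: "x + y \<in> ?S" if "x \<in> I" "y \<in> J" for x y using that by blast
  show ?thesis
    unfolding ideal_def V.subspace_def
  proof (intro conjI ballI allI)
    show "0 \<in> ?S" using mem[OF V.subspace_0[OF sI] V.subspace_0[OF sJ]] by simp
  next
    fix u v assume "u \<in> ?S" "v \<in> ?S"
    then obtain x y x' y' where xy: "x \<in> I" "y \<in> J" "x' \<in> I" "y' \<in> J"
      and uv: "u = x + y" "v = x' + y'" by blast
    have "u + v = (x + x') + (y + y')" unfolding uv by (simp add: algebra_simps)
    then show "u + v \<in> ?S" using mem V.subspace_add[OF sI] V.subspace_add[OF sJ] xy by simp
  next
    fix c u assume "u \<in> ?S"
    then obtain x y where xy: "x \<in> I" "y \<in> J" and u: "u = x + y" by blast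
    have "s c u = s c x + s c y" unfolding u by (rule V.scale_right_distrib)
    then show "s c u \<in> ?S" using mem V.subspace_scale[OF sI] V.subspace_scale[OF sJ] xy by simp
  next
    fix u a assume "u \<in> ?S"
    then obtain x y where xy: "x \<in> I" "y \<in> J" and u: "u = x + y" by blast
    have "a * u = a * x + a * y" "u * a = x * a + y * a"
      unfolding u by (simp_all add: distrib_left distrib_right)
    moreover have "a * x \<in> I" "x * a \<in> I" "a * y \<in> J" "y * a \<in> J"
      using I J xy unfolding ideal_def by blast+
    ultimately show "a * u \<in> ?S" "u * a \<in> ?S" using mem by simp_all
  qed
qed

lemma grading_aut_module_hom: "module_hom s s grading_aut"
  by (rule endo_module_hom) (rule grading_aut_add, rule grading_aut_scale)

lemma ideal_grading_aut_image:
  assumes I: "ideal I"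
  shows "ideal (grading_aut ` I)"
proof -
  have "V.subspace (grading_aut ` I)"
    using I module_hom.subspace_image[OF grading_aut_module_hom] unfolding ideal_def by blast
  moreover have "a * grading_aut x \<in> grading_aut ` I \<and> grading_aut x * a \<in> grading_aut ` I"
    if x: "x \<in> I" for x a
  proof -
    have "a * grading_aut x = grading_aut (grading_aut a * x)"
      and "grading_aut x * a = grading_aut (x * grading_aut a)"
      unfolding grading_aut_mult grading_aut_involution by (rule refl)+
    moreover have "grading_aut a * x \<in> I" "x * grading_aut a \<in> I"
      using I x unfolding ideal_def by blast+
    ultimately show ?thesis by simp
  qed
  ultimately show ?thesis unfolding ideal_def by blast
qed

lemma ideal_right_annihilator:
  assumes I: "ideal I"
  shows "ideal {z. \<forall>x\<in>I. x * z = 0}"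
proof -
  have "{z. \<forall>x\<in>I. x * z = 0} = (\<Inter>x\<in>I. {z. x * z = 0})" by blast
  then have "V.subspace {z. \<forall>x\<in>I. x * z = 0}"
    using V.subspace_Inter module_hom.subspace_kernel[OF mult_left_module_hom] by auto
  moreover have "x * (a * z) = 0 \<and> x * (z * a) = 0" if "\<forall>x\<in>I. x * z = 0" "x \<in> I" for x z a
  proof -
    have "x * a \<in> I" using I that(2) unfolding ideal_def by blast
    then show ?thesis using that by (metis mult.assoc mult_zero_left)
  qed
  ultimately show ?thesis unfolding ideal_def by blast
qed

lemma ideal_unit_central:
  assumes K: "ideal K" and e: "e \<in> K" and unit: "\<And>k. k \<in> K \<Longrightarrow> e * k = k \<and> k * e = k"
  shows "e * x = x * e"
proof -
  have "e * x = e * x * e" using unit[of "e * x"] K e unfolding ideal_def by metis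
  also have "\<dots> = x * e" using unit[of "x * e"] K e unfolding ideal_def by (metis mult.assoc)
  finally show ?thesis .
qed

text \<open>A unit element of an ideal stable under the grading automorphism is even:
  by uniqueness of units it is fixed by the automorphism.\<close>

lemma ideal_unit_even:
  assumes K: "ideal K" and stable: "grading_aut ` K \<subseteq> K" and e: "e \<in> K"
    and unit: "\<And>k. k \<in> K \<Longrightarrow> e * k = k \<and> k * e = k"
  shows "e \<in> P False"
proof (rule grading_aut_fixed_even)
  have e': "grading_aut e \<in> K" using stable e by blast
  have "grading_aut e * e = grading_aut (e * grading_aut e)"
    by (simp add: grading_aut_mult grading_aut_involution)
  also have "\<dots> = e" using unit[OF e'] by (simp add: grading_aut_involution)
  finally show "grading_aut e = e" using unit[OF e'] by simp
qed

end


section \<open>Semisimple graded algebras\<close>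

locale semisimple_graded_alg = graded_alg +
  assumes semisimple: "semisimple_galg s P UNIV"
begin

lemma stable_square_zero_ideal:
  assumes I: "ideal I" and stable: "grading_aut ` I \<subseteq> I" and zero: "\<forall>x\<in>I. \<forall>y\<in>I. x * y = 0"
  shows "I \<subseteq> {0}"
proof -
  have "graded_ideal s P UNIV I"
    using I stable_subspace_graded[OF _ stable] unfolding ideal_def graded_ideal_def by blast
  moreover have "nilpotent_set I"
    unfolding nilpotent_set_def
  proof (intro exI[of _ 1] allI impI)
    fix x xs assume "x \<in> I" "set xs \<subseteq> I" "length xs = 1"
    then show "mprod x xs = 0" using zero by (cases xs) auto
  qed
  ultimately show ?thesis using semisimple[unfolded semisimple_galg_def, rule_format, of I] by simp
qed

text \<open>First I \<inter> \<theta>(I) is a stable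
  square-zero ideal, hence zero; so I \<theta>(I) = \<theta>(I) I = 0 and I + \<theta>(I) is a stable
  square-zero ideal, hence zero as well (\<theta> the grading automorphism).\<close>

lemma square_zero_ideal:
  assumes I: "ideal I" and zero: "\<forall>x\<in>I. \<forall>y\<in>I. x * y = 0"
  shows "I \<subseteq> {0}"
proof -
  define J where "J = grading_aut ` I"
  have J: "ideal J" unfolding J_def by (rule ideal_grading_aut_image[OF I])
  have swap: "grading_aut x \<in> J \<longleftrightarrow> x \<in> I" for x
  proof
    assume "grading_aut x \<in> J"
    then obtain y where "y \<in> I" "grading_aut x = grading_aut y" unfolding J_def by auto
    then show "x \<in> I" using grading_aut_involution by metis
  qed (auto simp: J_def)
  have swap': "x \<in> J \<longleftrightarrow> grading_aut x \<in> I" for x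
    using swap[of "grading_aut x"] unfolding grading_aut_involution .
  have zeroJ: "\<forall>x\<in>J. \<forall>y\<in>J. x * y = 0"
    using zero unfolding J_def by (auto simp: grading_aut_mult[symmetric] grading_aut_zero)
  have "I \<inter> J \<subseteq> {0}"
  proof (rule stable_square_zero_ideal)
    show "ideal (I \<inter> J)" using ideal_Int[OF I J] .
    show "grading_aut ` (I \<inter> J) \<subseteq> I \<inter> J"
      using swap swap' by blast
    show "\<forall>x\<in>I \<inter> J. \<forall>y\<in>I \<inter> J. x * y = 0" using zero by blast
  qed
  then have cross: "x * y = 0" "y * x = 0" if "x \<in> I" "y \<in> J" for x y
    using that I J unfolding ideal_def by blast+
  define S where "S = {x + y | x y. x \<in> I \<and> y \<in> J}"
  have "S \<subseteq> {0}"
  proof (rule stable_square_zero_ideal)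
    show "ideal S" unfolding S_def by (rule ideal_sum[OF I J])
    show "grading_aut ` S \<subseteq> S"
    proof
      fix u assume "u \<in> grading_aut ` S"
      then obtain x y where "x \<in> I" "y \<in> J" "u = grading_aut y + grading_aut x"
        unfolding S_def by (auto simp: grading_aut_add add.commute)
      then show "u \<in> S" unfolding S_def using swap swap' by blast
    qed
    show "\<forall>u\<in>S. \<forall>v\<in>S. u * v = 0"
    proof (intro ballI)
      fix u v assume "u \<in> S" "v \<in> S"
      then obtain x y x' y' where "x \<in> I" "y \<in> J" "u = x + y" "x' \<in> I" "y' \<in> J" "v = x' + y'"
        unfolding S_def by blast
      then show "u * v = 0"
        using zero zeroJ cross(1)[of x y'] cross(2)[of x' y] by (simp add: distrib_left distrib_right)
    qed
  qed
  moreover have "I \<subseteq> S"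
  proof
    fix x assume "x \<in> I"
    moreover have "0 \<in> J" using J V.subspace_0 unfolding ideal_def by blast
    ultimately have "x + 0 \<in> S" unfolding S_def by blast
    then show "x \<in> S" by simp
  qed
  ultimately show ?thesis by blast
qed

text \<open>Semiprimeness: x A x = 0 forces x = 0.  The elements y with y x = y A x = 0 form an
  ideal W containing x, and W intersected with its right annihilator is a square-zero
  ideal containing x.\<close>

lemma semiprime:
  fixes x :: 'a
  assumes xx: "x * x = 0" and xax: "\<And>a. x * a * x = 0"
  shows "x = 0"
proof -
  define W where "W = {y. y * x = 0 \<and> (\<forall>a. y * a * x = 0)}"
  have W: "ideal W"
    unfolding ideal_def V.subspace_def W_def
    by (auto simp: distrib_right scale_mult_left mult.assoc) (metis mult.assoc)
  define R where "R = {z. \<forall>w\<in>W. w * z = 0}"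
  have R: "ideal R" unfolding R_def by (rule ideal_right_annihilator[OF W])
  have "W \<inter> R \<subseteq> {0}"
    by (rule square_zero_ideal[OF ideal_Int[OF W R]]) (auto simp: R_def)
  moreover have "x \<in> W \<inter> R" using xx xax unfolding W_def R_def by auto
  ultimately show ?thesis by blast
qed

end


section \<open>Finite-dimensional semisimple graded algebras\<close>

locale fd_semisimple_graded_alg = semisimple_graded_alg +
  assumes finite_dim: "fin_dim s"
begin

text \<open>A has a finite basis; fixing one gives access to the dimension theory of
  finite-dimensional vector spaces, used for the minimality arguments below.\<close>

lemma finite_basis_exists: "\<exists>B. finite B \<and> V.independent B \<and> V.span B = UNIV"
proof -
  obtain B0 where B0: "finite B0" "V.span B0 = UNIV"
    using finite_dim unfolding fin_dim_def by auto
  obtain B where B: "V.independent B" "UNIV \<subseteq> V.span B" using V.basis_exists[of UNIV] by metis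
  have "finite B" using V.independent_span_bound[OF B0(1) B(1)] B0(2) by auto
  then show ?thesis using B by auto
qed

definition basis :: "'a set" where
  "basis = (SOME B. finite B \<and> V.independent B \<and> V.span B = UNIV)"

sublocale F: finite_dimensional_vector_space s basis
  using someI_ex[OF finite_basis_exists] unfolding basis_def by unfold_locales auto

definition right_ideal :: "'a set \<Rightarrow> bool" where
  "right_ideal M \<longleftrightarrow> V.subspace M \<and> (\<forall>m\<in>M. \<forall>a. m * a \<in> M)"

text \<open>Every nonzero right ideal T contains a nonzero idempotent: take a nonzero right
  ideal M \<subseteq> T of least dimension and x \<in> M with x M \<noteq> 0; then x M = M yields x = x e
  with e \<in> M, and the right ideal of m \<in> M with x m = 0 is zero, so e e = e.\<close>

lemma right_ideal_idempotent:
  assumes T: "right_ideal T" and x0: "x0 \<in> T" "x0 \<noteq> 0"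
  shows "\<exists>g\<in>T. g \<noteq> 0 \<and> g * g = g"
proof -
  let ?Q = "\<lambda>M. right_ideal M \<and> M \<subseteq> T \<and> (\<exists>x\<in>M. x \<noteq> 0)"
  obtain M where QM: "?Q M" and least: "\<And>M'. ?Q M' \<Longrightarrow> V.dim M \<le> V.dim M'"
    using ex_has_least_nat[of ?Q T V.dim] T x0 by blast
  have M: "V.subspace M" and Mr: "\<And>m a. m \<in> M \<Longrightarrow> m * a \<in> M"
    using QM unfolding right_ideal_def by auto
  have minimal: "R = M" if "right_ideal R" "R \<subseteq> M" "\<exists>x\<in>R. x \<noteq> 0" for R
    using F.subspace_dim_equal[OF _ M] least[of R] that QM unfolding right_ideal_def by blast
  obtain x y where xy: "x \<in> M" "y \<in> M" "x * y \<noteq> 0"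
  proof -
    obtain m where m: "m \<in> M" "m \<noteq> 0" using QM by blast
    then consider "m * m \<noteq> 0" | a where "m * a * m \<noteq> 0" using semiprime by blast
    then show ?thesis using that m Mr by cases blast+
  qed
  have "(\<lambda>m. x * m) ` M = M"
  proof (rule minimal)
    show "right_ideal ((\<lambda>m. x * m) ` M)"
      unfolding right_ideal_def
      using module_hom.subspace_image[OF mult_left_module_hom M] Mr
      by (auto simp: mult.assoc)
  qed (use xy Mr in auto)
  then obtain e where e: "e \<in> M" "x * e = x" using xy(1) by (metis imageE)
  define R where "R = {m \<in> M. x * m = 0}"
  have "R \<noteq> M" using xy unfolding R_def by auto
  moreover have "right_ideal R"
    unfolding right_ideal_def R_def
    using V.subspace_inter[OF M module_hom.subspace_kernel[OF mult_left_module_hom]] Mr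
    by (auto simp: Int_def mult.assoc[symmetric])
  ultimately have R0: "\<forall>r\<in>R. r = 0" using minimal unfolding R_def by blast
  have "e * e - e \<in> R"
    unfolding R_def using e Mr V.subspace_diff[OF M]
    by (simp add: right_diff_distrib mult.assoc[symmetric])
  then have "e * e = e" using R0 by auto
  moreover have "e \<noteq> 0" using e xy by auto
  ultimately show ?thesis using e QM by auto
qed

text \<open>Every ideal K contains a left unit: among idempotents e \<in> K choose one whose
  defect space {k - e k | k \<in> K} has least dimension.  A nonzero defect space is a right
  ideal and contains a nonzero idempotent g with e g = 0, and e + g - g e then has a
  strictly smaller defect space.\<close>

lemma ideal_left_unit:
  assumes K: "ideal K"
  shows "\<exists>e\<in>K. e * e = e \<and> (\<forall>k\<in>K. e * k = k)"
proof -
  have Ksub: "V.subspace K" and Kl: "\<And>k a. k \<in> K \<Longrightarrow> a * k \<in> K"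
    and Kr: "\<And>k a. k \<in> K \<Longrightarrow> k * a \<in> K"
    using K unfolding ideal_def by auto
  define defect where "defect e = (\<lambda>k. k - e * k) ` K" for e
  have defect_sub: "V.subspace (defect e)" for e
    unfolding defect_def
    by (rule module_hom.subspace_image[OF endo_module_hom Ksub])
      (simp_all add: algebra_simps scale_mult_right V.scale_right_diff_distrib)
  have defect_right: "right_ideal (defect e)" for e
    unfolding right_ideal_def
  proof (intro conjI ballI allI defect_sub)
    fix u a assume "u \<in> defect e"
    then obtain k where k: "k \<in> K" and u: "u = k - e * k" unfolding defect_def by auto
    have "u * a = k * a - e * (k * a)" unfolding u by (simp add: left_diff_distrib mult.assoc)
    then show "u * a \<in> defect e" unfolding defect_def using Kr[OF k] by blast
  qed
  let ?Q = "\<lambda>e. e \<in> K \<and> e * e = e"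
  obtain e where Qe: "?Q e" and least: "\<And>e'. ?Q e' \<Longrightarrow> V.dim (defect e) \<le> V.dim (defect e')"
    using ex_has_least_nat[of ?Q 0 "\<lambda>e. V.dim (defect e)"] V.subspace_0[OF Ksub] by auto
  have "e * k = k" if k: "k \<in> K" for k
  proof (rule ccontr)
    assume "e * k \<noteq> k"
    then have "k - e * k \<in> defect e" "k - e * k \<noteq> 0" using k unfolding defect_def by auto
    then obtain g where g: "g \<in> defect e" "g \<noteq> 0" "g * g = g"
      using right_ideal_idempotent[OF defect_right] by blast
    then obtain k0 where k0: "k0 \<in> K" "g = k0 - e * k0" unfolding defect_def by auto
    have eg: "e * g = 0" using k0 Qe by (simp add: right_diff_distrib mult.assoc[symmetric])
    have gK: "g \<in> K" using k0 Kl V.subspace_diff[OF Ksub] by auto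
    define e' where "e' = e + g - g * e"
    note ext = idempotent_extension[of e g, OF _ g(3) eg, folded e'_def]
    have e'K: "e' \<in> K"
      unfolding e'_def using gK Qe Kr V.subspace_add[OF Ksub] V.subspace_diff[OF Ksub] by auto
    have smaller: "defect e' \<subseteq> defect e"
    proof
      fix u assume "u \<in> defect e'"
      then obtain k where k: "k \<in> K" "u = k - e' * k" unfolding defect_def by auto
      then have "u = (k - e * k) - g * (k - e * k)"
        unfolding e'_def by (simp add: algebra_simps mult.assoc)
      moreover have "k - e * k \<in> defect e" using k unfolding defect_def by auto
      moreover have "g * (k - e * k) \<in> defect e"
        using defect_right g(1) Kr k(1) unfolding right_ideal_def defect_def
        by (metis (no_types, lifting) imageI k(1))
      ultimately show "u \<in> defect e" using V.subspace_diff[OF defect_sub] by auto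
    qed
    have "g \<notin> defect e'"
    proof
      assume "g \<in> defect e'"
      then obtain k where "g = k - e' * k" unfolding defect_def by auto
      then have "e' * g = 0" using ext Qe by (simp add: right_diff_distrib mult.assoc[symmetric])
      then show False using ext g Qe by simp
    qed
    moreover have "defect e' = defect e"
      using F.subspace_dim_equal[OF defect_sub defect_sub smaller] least[of e'] e'K ext Qe
      by auto
    ultimately show False using g(1) by simp
  qed
  then show ?thesis using Qe by blast
qed

text \<open>A left unit e of K is also a right unit: l = k - k e satisfies l K = 0, so
  l A l = 0 and semiprimeness gives l = 0.\<close>

lemma ideal_unit:
  assumes K: "ideal K"
  shows "\<exists>e\<in>K. \<forall>k\<in>K. e * k = k \<and> k * e = k"
proof -
  obtain e where e: "e \<in> K" "e * e = e" and left: "\<And>k. k \<in> K \<Longrightarrow> e * k = k"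
    using ideal_left_unit[OF K] by blast
  have "k * e = k" if k: "k \<in> K" for k
  proof -
    define l where "l = k - k * e"
    have lK: "l \<in> K" using K k e unfolding ideal_def l_def by (metis V.subspace_diff)
    have le: "l * e = 0" unfolding l_def by (simp add: left_diff_distrib mult.assoc e(2))
    have lz: "l * z = 0" if "z \<in> K" for z
      using left[OF that] le by (metis mult.assoc mult_zero_left)
    have "l = 0"
      by (rule semiprime) (use lz lK K in \<open>auto simp: ideal_def mult.assoc\<close>)
    then show ?thesis unfolding l_def by simp
  qed
  then show ?thesis using e left by blast
qed

end


section \<open>Graded homomorphisms and supercentralizers\<close>

definition supercommuting :: "(bool \<Rightarrow> 'a::ring set) \<Rightarrow> 'a set \<Rightarrow> 'a set \<Rightarrow> 'a set" where
  "supercommuting P S C = {a. \<exists>p. a \<in> S \<inter> P p \<and>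
      (\<forall>q c. c \<in> C \<inter> P q \<longrightarrow> a * c = (if p \<and> q then - (c * a) else c * a))}"

lemma SZ_span_supercommuting: "SZ s P S C = module.span s (supercommuting P S C)"
  unfolding SZ_def supercommuting_def ..

locale graded_alg_hom =
  A: fd_semisimple_graded_alg s P + B: graded_alg t Q
  for s :: "complex \<Rightarrow> 'a::ring \<Rightarrow> 'a" and P :: "bool \<Rightarrow> 'a set"
    and t :: "complex \<Rightarrow> 'b::ring \<Rightarrow> 'b" and Q :: "bool \<Rightarrow> 'b set" +
  fixes f :: "'a \<Rightarrow> 'b"
  assumes hom: "graded_hom s P t Q f"
begin

lemma module_hom: "module_hom s t f"
  using hom unfolding graded_hom_def by (simp add: module_hom_iff_linear)

lemma f_add: "f (x + y) = f x + f y"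
  and f_diff: "f (x - y) = f x - f y" and f_neg: "f (- x) = - f x"
  using module_hom.add[OF module_hom] module_hom.diff[OF module_hom]
    module_hom.neg[OF module_hom] by auto

lemma f_mult: "f (x * y) = f x * f y" and f_parity: "x \<in> P p \<Longrightarrow> f x \<in> Q p"
  using hom unfolding graded_hom_def by blast+

lemma f_proj: "f (A.proj q x) = B.proj q (f x)"
proof -
  have "f x = f (A.proj False x) + f (A.proj True x)" using A.proj_sum[of x] f_add by metis
  then show ?thesis
    using B.proj_decomp f_parity A.proj_spec by (cases q) metis+
qed

lemma f_grading_aut: "f (A.grading_aut x) = B.grading_aut (f x)"
  unfolding A.grading_aut_def B.grading_aut_def by (simp add: f_diff f_proj)

definition kernel_unit :: "'a \<Rightarrow> bool" where
  "kernel_unit e \<longleftrightarrow> e \<in> P False \<and> f e = 0 \<and> (\<forall>x. e * x = x * e) \<and> (\<forall>k. f k = 0 \<longrightarrow> e * k = k)"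

lemma kernel_unitD:
  assumes "kernel_unit e"
  shows "e \<in> P False" and "f e = 0" and "e * x = x * e" and "f k = 0 \<Longrightarrow> e * k = k"
  using assms unfolding kernel_unit_def by blast+

lemma kernel_unit_idempotent: "kernel_unit e \<Longrightarrow> e * e = e"
  using kernel_unitD(2,4) by blast

lemma kernel_unit_exists: "\<exists>e. kernel_unit e"
proof -
  define K where "K = {x. f x = 0}"
  have K: "A.ideal K"
    unfolding A.ideal_def K_def
    using module_hom.subspace_kernel[OF module_hom] by (simp add: f_mult)
  have stable: "A.grading_aut ` K \<subseteq> K"
    unfolding K_def by (auto simp: f_grading_aut B.grading_aut_zero)
  obtain e where e: "e \<in> K" and unit: "\<And>k. k \<in> K \<Longrightarrow> e * k = k \<and> k * e = k"
    using A.ideal_unit[OF K] by blast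
  show ?thesis
    unfolding kernel_unit_def
    using A.ideal_unit_even[OF K stable e unit] A.ideal_unit_central[OF K e unit] e unit
    by (auto simp: K_def)
qed

lemma homogeneous_lift:
  assumes e: "kernel_unit e" and b: "b \<in> range f" "b \<in> Q p"
  shows "\<exists>a\<in>P p. f a = b \<and> e * a = 0"
proof -
  obtain x where x: "b = f x" using b by blast
  define a0 where "a0 = A.proj p x"
  have a0: "a0 \<in> P p" unfolding a0_def using A.proj_spec by blast
  have fa0: "f a0 = b" unfolding a0_def f_proj x[symmetric] using b(2) by (rule B.proj_homogeneous)
  note ee = kernel_unit_idempotent[OF e] and fe = kernel_unitD(2)[OF e]
    and even = kernel_unitD(1)[OF e]
  have "e * a0 \<in> P p" using A.P_mult[OF even a0] by simp
  then have "a0 - e * a0 \<in> P p" using A.V.subspace_diff[OF A.subspace_P a0] by blast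
  moreover have "f (a0 - e * a0) = b" using fa0 fe by (simp add: f_diff f_mult)
  moreover have "e * (a0 - e * a0) = 0" using ee by (simp add: right_diff_distrib mult.assoc[symmetric])
  ultimately show ?thesis by blast
qed

lemma kernel_unit_injective:
  assumes "kernel_unit e" and "e * x = 0" and "f x = 0"
  shows "x = 0"
  using kernel_unitD(4)[OF assms(1,3)] assms(2) by simp

text \<open>f maps supercommuting homogeneous elements for C to supercommuting ones for f(C):
  homogeneous elements of f(C) have homogeneous preimages in the graded subspace C.\<close>

lemma supercommuting_image:
  assumes C: "graded_subspace s P C"
  shows "f ` supercommuting P UNIV C \<subseteq> supercommuting Q (range f) (f ` C)"
proof
  fix b assume "b \<in> f ` supercommuting P UNIV C"
  then obtain a p where a: "b = f a" "a \<in> P p"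
    "\<And>q c. c \<in> C \<inter> P q \<Longrightarrow> a * c = (if p \<and> q then - (c * a) else c * a)"
    unfolding supercommuting_def by blast
  have "b * c' = (if p \<and> q then - (c' * b) else c' * b)" if c': "c' \<in> f ` C \<inter> Q q" for q c'
  proof -
    obtain c where c: "c \<in> C" "c' = f c" using c' by auto
    have "A.proj q c \<in> C \<inter> P q" using A.graded_subspace_proj[OF C c(1)] A.proj_spec by blast
    moreover have "f (A.proj q c) = c'" using c c' f_proj B.proj_homogeneous by auto
    ultimately show ?thesis using a(3)[of "A.proj q c" q] unfolding a(1)
      by (auto simp: f_mult[symmetric] f_neg)
  qed
  then show "b \<in> supercommuting Q (range f) (f ` C)"
    unfolding supercommuting_def using a f_parity by blast
qed

text \<open>Conversely, a supercommuting homogeneous element of f(A) lifts: take a homogeneous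
  preimage a with e a = 0; each supercommutation defect of a maps to 0 and is killed by e.\<close>

lemma supercommuting_lift:
  "supercommuting Q (range f) (f ` C) \<subseteq> f ` supercommuting P UNIV C"
proof
  fix b assume "b \<in> supercommuting Q (range f) (f ` C)"
  then obtain p where b: "b \<in> range f" "b \<in> Q p"
    and comm: "\<And>q c. c \<in> f ` C \<inter> Q q \<Longrightarrow> b * c = (if p \<and> q then - (c * b) else c * b)"
    unfolding supercommuting_def by blast
  obtain e where e: "kernel_unit e" using kernel_unit_exists by blast
  then obtain a where a: "a \<in> P p" "f a = b" "e * a = 0" using homogeneous_lift b by blast
  have "a * c = (if p \<and> q then - (c * a) else c * a)" if c: "c \<in> C \<inter> P q" for q c
  proof -
    define D where "D = a * c - (if p \<and> q then - (c * a) else c * a)"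
    have "f c \<in> f ` C \<inter> Q q" using c f_parity by blast
    then have fD: "f D = 0"
      using comm[of "f c" q] unfolding D_def a(2)[symmetric] by (simp add: f_diff f_mult f_neg)
    have "e * (a * c) = 0" using a(3) by (simp add: mult.assoc[symmetric])
    moreover have "e * (c * a) = 0"
      using a(3) kernel_unitD(3)[OF e, of c] by (metis mult.assoc mult_zero_right)
    ultimately have "e * D = 0" unfolding D_def by (simp add: right_diff_distrib)
    then have "D = 0" using kernel_unit_injective[OF e _ fD] by blast
    then show ?thesis unfolding D_def by simp
  qed
  then have "a \<in> supercommuting P UNIV C" unfolding supercommuting_def using a(1) by blast
  then show "b \<in> f ` supercommuting P UNIV C" using a(2) by blast
qed

end

theorem mainTheorem12:
  fixes s :: "complex \<Rightarrow> 'a::ring \<Rightarrow> 'a" and P :: "bool \<Rightarrow> 'a set"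
    and t :: "complex \<Rightarrow> 'b::ring \<Rightarrow> 'b" and Q :: "bool \<Rightarrow> 'b set"
    and f :: "'a \<Rightarrow> 'b" and C :: "'a set"
  assumes "graded_algebra s P" and "fin_dim s" and "semisimple_galg s P UNIV"
    and "graded_algebra t Q" and "fin_dim t" and "semisimple_galg t Q UNIV"
    and "graded_hom s P t Q f"
    and "graded_subalgebra s P C" and "simple_galg s P C"
  shows "f ` SZ s P UNIV C = SZ t Q (range f) (f ` C)"
proof -
  interpret graded_alg_hom s P t Q f
    using assms(1-4,7) by unfold_locales
  have C: "graded_subspace s P C"
    using assms(8) unfolding graded_subalgebra_def by blast
  have generators: "f ` supercommuting P UNIV C = supercommuting Q (range f) (f ` C)"
    using supercommuting_image[OF C] supercommuting_lift by (rule subset_antisym)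
  have "f ` SZ s P UNIV C = B.V.span (f ` supercommuting P UNIV C)"
    unfolding SZ_span_supercommuting by (rule module_hom.span_image[OF module_hom, symmetric])
  also have "\<dots> = SZ t Q (range f) (f ` C)"
    unfolding generators SZ_span_supercommuting ..
  finally show ?thesis .
qed

end
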